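(* Let $\mathbb{V}$ be the variety in the language consisting of one binary operation symbol $*$ and two constant symbols $p$ and $0$, defined by the laws (writing $a*b*c$ for $(a*b)*c$) $$0*x = x*0 = 0,\qquad x*y*z = x*z*y,\qquad x*(y*z) = 0,\qquad x*y*y = 0.$$ Then $\mathbb{V}$ is a finitely based, locally finite variety which has uncountably many term clones.
   Context: Let $F_{\mathbb{V}}$ denote the free algebra in $\mathbb{V}$ on countably many generators $x_1, x_2, \ldots$. A term clone of $\mathbb{V}$ is a subset $S \subseteq F_{\mathbb{V}}$ which contains all the generators $x_1, x_2, \ldots$ and is closed under substitution: whenever $t(x_1,\ldots,x_n) \in S$ and $t_1,\ldots,t_n \in S$, then $t(t_1,\ldots,t_n) \in S$. (Equivalently, a term clone is a set of term functions of $F_{\mathbb{V}}$ containing all projections and closed under composition.) A variety is locally finite if every finitely generated algebra in it is finite, and finitely based if it is defined by finitely many laws. *)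

theory Defs
  imports Main "HOL-Library.Countable_Set"
begin

(* Terms in the language {*, p, 0}; variables x_1, x_2, ... are V 0, V 1, ... *)
datatype trm = V nat | Mul trm trm | P | Z

fun subst :: "(nat \<Rightarrow> trm) \<Rightarrow> trm \<Rightarrow> trm" where
  "subst \<sigma> (V i) = \<sigma> i"
| "subst \<sigma> (Mul s t) = Mul (subst \<sigma> s) (subst \<sigma> t)"
| "subst \<sigma> P = P"
| "subst \<sigma> Z = Z"

inductive ded :: "(trm \<times> trm) set \<Rightarrow> trm \<Rightarrow> trm \<Rightarrow> bool" for E where
  ax: "(s, t) \<in> E \<Longrightarrow> ded E (subst \<sigma> s) (subst \<sigma> t)"
| refl: "ded E t t"
| sym: "ded E s t \<Longrightarrow> ded E t s"
| trans: "ded E s t \<Longrightarrow> ded E t u \<Longrightarrow> ded E s u"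
| cong: "ded E s1 t1 \<Longrightarrow> ded E s2 t2 \<Longrightarrow> ded E (Mul s1 s2) (Mul t1 t2)"

definition lawsV :: "(trm \<times> trm) set" where
  "lawsV = {(Mul Z (V 0), Z),
            (Mul (V 0) Z, Z),
            (Mul (Mul (V 0) (V 1)) (V 2), Mul (Mul (V 0) (V 2)) (V 1)),
            (Mul (V 0) (Mul (V 1) (V 2)), Z),
            (Mul (Mul (V 0) (V 1)) (V 1), Z)}"

definition finitely_based_V :: bool where
  "finitely_based_V \<longleftrightarrow>
     (\<exists>E. finite E \<and> (\<forall>s t. ded E s t \<longleftrightarrow> ded lawsV s t))"

(* Algebras of the language: carrier A, binary op m, constants pc (for p) and zc (for 0) *)
fun eval :: "('a \<Rightarrow> 'a \<Rightarrow> 'a) \<Rightarrow> 'a \<Rightarrow> 'a \<Rightarrow> (nat \<Rightarrow> 'a) \<Rightarrow> trm \<Rightarrow> 'a" where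
  "eval m pc zc \<rho> (V i) = \<rho> i"
| "eval m pc zc \<rho> (Mul s t) = m (eval m pc zc \<rho> s) (eval m pc zc \<rho> t)"
| "eval m pc zc \<rho> P = pc"
| "eval m pc zc \<rho> Z = zc"

definition in_V :: "'a set \<Rightarrow> ('a \<Rightarrow> 'a \<Rightarrow> 'a) \<Rightarrow> 'a \<Rightarrow> 'a \<Rightarrow> bool" where
  "in_V A m pc zc \<longleftrightarrow> pc \<in> A \<and> zc \<in> A \<and> (\<forall>a\<in>A. \<forall>b\<in>A. m a b \<in> A) \<and>
     (\<forall>(s, t)\<in>lawsV. \<forall>\<rho>. (\<forall>i. \<rho> i \<in> A) \<longrightarrow> eval m pc zc \<rho> s = eval m pc zc \<rho> t)"

inductive_set gen :: "('a \<Rightarrow> 'a \<Rightarrow> 'a) \<Rightarrow> 'a \<Rightarrow> 'a \<Rightarrow> 'a set \<Rightarrow> 'a set"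
  for m pc zc X where
  base: "x \<in> X \<Longrightarrow> x \<in> gen m pc zc X"
| gp: "pc \<in> gen m pc zc X"
| gz: "zc \<in> gen m pc zc X"
| gm: "a \<in> gen m pc zc X \<Longrightarrow> b \<in> gen m pc zc X \<Longrightarrow> m a b \<in> gen m pc zc X"

definition finitely_generated :: "'a set \<Rightarrow> ('a \<Rightarrow> 'a \<Rightarrow> 'a) \<Rightarrow> 'a \<Rightarrow> 'a \<Rightarrow> bool" where
  "finitely_generated A m pc zc \<longleftrightarrow> (\<exists>X. finite X \<and> X \<subseteq> A \<and> gen m pc zc X = A)"

(* Locally finite (for algebras whose carrier lives in type 'a; the theorem is
   stated for an arbitrary type variable 'a, i.e. for all types) *)
definition locally_finite_V :: "'a itself \<Rightarrow> bool" where
  "locally_finite_V _ \<longleftrightarrow>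
     (\<forall>(A :: 'a set) m pc zc. in_V A m pc zc \<and> finitely_generated A m pc zc \<longrightarrow> finite A)"

(* Elements of the free algebra F_V on x_1, x_2, ...: equivalence classes of terms *)
definition cls :: "trm \<Rightarrow> trm set" where
  "cls t = {u. ded lawsV t u}"

definition FV :: "trm set set" where
  "FV = range cls"

definition term_clone :: "trm set set \<Rightarrow> bool" where
  "term_clone S \<longleftrightarrow> S \<subseteq> FV \<and> (\<forall>i. cls (V i) \<in> S) \<and>
     (\<forall>t \<sigma>. cls t \<in> S \<and> (\<forall>i. cls (\<sigma> i) \<in> S) \<longrightarrow> cls (subst \<sigma> t) \<in> S)"

end

theory Submission
  imports Defs
begin

text \<open>By the laws, every nonzero element of an algebra in \<open>\<V>\<close> generated by \<open>X\<close> is a left-normed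
  product \<open>a * b\<^sub>1 * \<dots> * b\<^sub>k\<close> with \<open>a, b\<^sub>i \<in> X \<union> {p}\<close> and the \<open>b\<^sub>i\<close> distinct, which bounds its size.
  The same description gives a model of \<open>\<V>\<close> on normal forms, so two terms are equal in \<open>F\<^sub>\<V>\<close>
  iff they have the same normal form. For \<open>N \<subseteq> \<nat>\<close>, the terms whose normal form is \<open>0\<close>, an atom,
  or a product in which \<open>p\<close> is one of the \<open>b\<^sub>i\<close> and exactly \<open>n \<in> N\<close> other \<open>b\<^sub>i\<close> occur, form a term
  clone: a substitution fixes \<open>p\<close>, and unless it produces \<open>0\<close> it sends the \<open>b\<^sub>i\<close> to distinct atoms,
  so it preserves \<open>n\<close>. The term \<open>x\<^sub>0 * p * x\<^sub>1 * \<dots> * x\<^sub>n\<close> lies in the clone for \<open>N\<close> iff \<open>n \<in> N\<close>,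
  so these clones are pairwise distinct.\<close>

lemma finitely_based_V: "finitely_based_V"
  unfolding finitely_based_V_def by (intro exI[of _ lawsV]) (simp add: lawsV_def)

section \<open>Local finiteness\<close>

lemma in_V_laws:
  assumes "in_V A m pc zc" "a \<in> A" "b \<in> A" "c \<in> A"
  shows "m zc a = zc" "m a zc = zc" "m (m a b) c = m (m a c) b"
    "m a (m b c) = zc" "m (m a b) b = zc"
proof -
  define \<rho> where "\<rho> = (\<lambda>i::nat. if i = 0 then a else if i = 1 then b else c)"
  have "\<forall>i. \<rho> i \<in> A" using assms unfolding \<rho>_def by auto
  then have law: "\<And>s t. (s, t) \<in> lawsV \<Longrightarrow> eval m pc zc \<rho> s = eval m pc zc \<rho> t"
    using assms(1) unfolding in_V_def by blast
  show "m zc a = zc" using law[of "Mul Z (V 0)" Z] by (simp add: lawsV_def \<rho>_def)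
  show "m a zc = zc" using law[of "Mul (V 0) Z" Z] by (simp add: lawsV_def \<rho>_def)
  show "m (m a b) c = m (m a c) b"
    using law[of "Mul (Mul (V 0) (V 1)) (V 2)" "Mul (Mul (V 0) (V 2)) (V 1)"]
    by (simp add: lawsV_def \<rho>_def)
  show "m a (m b c) = zc" using law[of "Mul (V 0) (Mul (V 1) (V 2))" Z]
    by (simp add: lawsV_def \<rho>_def)
  show "m (m a b) b = zc" using law[of "Mul (Mul (V 0) (V 1)) (V 1)" Z]
    by (simp add: lawsV_def \<rho>_def)
qed

lemma foldl_closed:
  assumes "\<forall>a\<in>A. \<forall>b\<in>A. m a b \<in> A" "a \<in> A" "set l \<subseteq> A"
  shows "foldl m a l \<in> A"
  using assms(2,3) by (induction l arbitrary: a) (use assms(1) in auto)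

lemma foldl_mul_member_eq_zero:
  assumes "in_V A m pc zc" "a \<in> A" "set l \<subseteq> A" "b \<in> set l"
  shows "m (foldl m a l) b = zc"
  using assms(3,4)
proof (induction l rule: rev_induct)
  case Nil
  then show ?case by simp
next
  case (snoc y l)
  then have "set l \<subseteq> A" "y \<in> A" by auto
  have "\<forall>a\<in>A. \<forall>b\<in>A. m a b \<in> A" using assms(1) unfolding in_V_def by blast
  then have prefix: "foldl m a l \<in> A" using foldl_closed assms(2) \<open>set l \<subseteq> A\<close> by metis
  show ?case
  proof (cases "b = y")
    case True
    then show ?thesis using in_V_laws(5)[OF assms(1) prefix \<open>y \<in> A\<close> \<open>y \<in> A\<close>] by simp
  next
    case False
    then have "b \<in> set l" "b \<in> A" using snoc.prems by auto
    then have "m (foldl m a l) b = zc" using snoc.IH \<open>set l \<subseteq> A\<close> by simp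
    moreover have "m (m (foldl m a l) y) b = m (m (foldl m a l) b) y"
      using in_V_laws(3)[OF assms(1) prefix \<open>y \<in> A\<close> \<open>b \<in> A\<close>] .
    ultimately show ?thesis using in_V_laws(1)[OF assms(1) \<open>y \<in> A\<close> \<open>y \<in> A\<close> \<open>y \<in> A\<close>] by simp
  qed
qed

definition monomials :: "('a \<Rightarrow> 'a \<Rightarrow> 'a) \<Rightarrow> 'a \<Rightarrow> 'a set \<Rightarrow> 'a set" where
  "monomials m zc Y = insert zc {foldl m a l | a l. a \<in> Y \<and> set l \<subseteq> Y \<and> distinct l}"

lemma finite_monomials: "finite Y \<Longrightarrow> finite (monomials m zc Y)"
  unfolding monomials_def by (intro finite_insert[THEN iffD2] finite_image_set2 finite_subset_distinct) auto

lemma monomials_subset: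
  assumes "in_V A m pc zc" "Y \<subseteq> A"
  shows "monomials m zc Y \<subseteq> A"
proof -
  have "\<forall>a\<in>A. \<forall>b\<in>A. m a b \<in> A" "zc \<in> A" using assms(1) unfolding in_V_def by auto
  then have "foldl m a l \<in> A" if "a \<in> Y" "set l \<subseteq> Y" for a l
    using foldl_closed that assms(2) by (metis subset_trans subsetD)
  then show ?thesis using \<open>zc \<in> A\<close> unfolding monomials_def by auto
qed

lemma monomials_mul_closed:
  assumes V: "in_V A m pc zc" and "Y \<subseteq> A"
    and a: "a \<in> monomials m zc Y" and b: "b \<in> monomials m zc Y"
  shows "m a b \<in> monomials m zc Y"
proof (cases "a = zc \<or> b = zc")
  case True
  have "a \<in> A" "b \<in> A" using monomials_subset[OF V \<open>Y \<subseteq> A\<close>] a b by auto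
  then show ?thesis using True in_V_laws(1,2)[OF V] by (auto simp: monomials_def)
next
  case False
  then obtain a0 l where a0: "a0 \<in> Y" "set l \<subseteq> Y" "distinct l" "a = foldl m a0 l"
    using a by (auto simp: monomials_def)
  obtain b0 l' where b0: "b0 \<in> Y" "set l' \<subseteq> Y" "b = foldl m b0 l'"
    using b False by (auto simp: monomials_def)
  show ?thesis
  proof (cases l' rule: rev_exhaust)
    case Nil
    show ?thesis
    proof (cases "b0 \<in> set l")
      case True
      then have "m a b = zc"
        using foldl_mul_member_eq_zero[OF V, of a0 l b0] a0 b0 Nil \<open>Y \<subseteq> A\<close> by auto
      then show ?thesis by (simp add: monomials_def)
    next
      case False
      then have "m a b = foldl m a0 (l @ [b0])" "set (l @ [b0]) \<subseteq> Y" "distinct (l @ [b0])"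
        using a0 b0 Nil by auto
      then show ?thesis using a0 unfolding monomials_def by blast
    qed
  next
    case (snoc l0 v)
    have closed: "\<forall>a\<in>A. \<forall>b\<in>A. m a b \<in> A" using V by (simp add: in_V_def)
    have "b0 \<in> A" "set l0 \<subseteq> A" "v \<in> A" "a0 \<in> A" "set l \<subseteq> A"
      using a0 b0 snoc \<open>Y \<subseteq> A\<close> by auto
    then have "m a (m (foldl m b0 l0) v) = zc"
      using in_V_laws(4)[OF V] foldl_closed[OF closed] a0(4) by simp
    then show ?thesis using b0 snoc by (simp add: monomials_def)
  qed
qed

lemma gen_subset_monomials:
  assumes V: "in_V A m pc zc" and "X \<subseteq> A"
  shows "gen m pc zc X \<subseteq> monomials m zc (insert pc X)"
proof
  have Y: "insert pc X \<subseteq> A" using V \<open>X \<subseteq> A\<close> by (simp add: in_V_def)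
  have atom: "x \<in> monomials m zc (insert pc X)" if "x \<in> insert pc X" for x
  proof -
    have "x = foldl m x []" "set [] \<subseteq> insert pc X" "distinct []" by simp_all
    then show ?thesis using that unfolding monomials_def by blast
  qed
  fix x
  assume "x \<in> gen m pc zc X"
  then show "x \<in> monomials m zc (insert pc X)"
  proof induction
    case gz
    then show ?case by (simp add: monomials_def)
  qed (simp_all add: atom monomials_mul_closed[OF V Y])
qed

lemma locally_finite_V: "locally_finite_V TYPE('a)"
  unfolding locally_finite_V_def
proof (intro allI impI, elim conjE)
  fix A :: "'a set" and m pc zc
  assume V: "in_V A m pc zc" and "finitely_generated A m pc zc"
  then obtain X where "finite X" "X \<subseteq> A" "gen m pc zc X = A"
    unfolding finitely_generated_def by blast
  then show "finite A"
    using gen_subset_monomials[OF V] finite_monomials[of "insert pc X"] by (metis finite_insert finite_subset)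
qed

section \<open>The model of normal forms\<close>

lemma eval_subst:
  "eval m pc zc \<rho> (subst \<sigma> t) = eval m pc zc (\<lambda>i. eval m pc zc \<rho> (\<sigma> i)) t"
  by (induction t) auto

lemma ded_sound:
  assumes "\<And>s t \<rho>. (s, t) \<in> E \<Longrightarrow> eval m pc zc \<rho> s = eval m pc zc \<rho> t"
    and "ded E s t"
  shows "eval m pc zc \<rho> s = eval m pc zc \<rho> t"
  using assms(2)
proof (induction arbitrary: \<rho>)
  case (ax s t \<sigma>)
  then show ?case using assms(1) by (simp add: eval_subst)
qed auto

datatype atom = AV nat | AP

text \<open>\<^term>\<open>Some (a, B)\<close> stands for the product \<open>a * b\<^sub>1 * \<dots> * b\<^sub>k\<close> of an atom and the
  distinct atoms \<open>B = {b\<^sub>1, \<dots>, b\<^sub>k}\<close>, whose order is irrelevant by the second law;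
  \<^term>\<open>None\<close> stands for \<open>0\<close>.\<close>

type_synonym nform = "(atom \<times> atom set) option"

fun nmul :: "nform \<Rightarrow> nform \<Rightarrow> nform" where
  "nmul (Some (a, B)) (Some (b, C)) = (if C = {} \<and> b \<notin> B then Some (a, insert b B) else None)"
| "nmul _ _ = None"

abbreviation neval :: "(nat \<Rightarrow> nform) \<Rightarrow> trm \<Rightarrow> nform" where
  "neval \<equiv> eval nmul (Some (AP, {})) None"

abbreviation nf :: "trm \<Rightarrow> nform" where
  "nf \<equiv> neval (\<lambda>i. Some (AV i, {}))"

lemma nmul_None_right [simp]: "nmul x None = None"
  by (cases x) auto

lemma nmul_right_commute: "nmul (nmul x y) z = nmul (nmul x z) y"
  by (cases x; cases y; cases z) auto

lemma nmul_nmul_right: "nmul x (nmul y z) = None"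
  by (cases x; cases y; cases z) auto

lemma nmul_square_right: "nmul (nmul x y) y = None"
  by (cases x; cases y) auto

lemma neval_lawsV: "(s, t) \<in> lawsV \<Longrightarrow> neval \<rho> s = neval \<rho> t"
  by (auto simp: lawsV_def nmul_right_commute nmul_nmul_right nmul_square_right)

lemma nf_eq_if_ded: "ded lawsV s t \<Longrightarrow> nf s = nf t"
  by (rule ded_sound[OF neval_lawsV])

definition is_atom :: "nform \<Rightarrow> bool" where
  "is_atom x \<longleftrightarrow> (\<exists>c. x = Some (c, {}))"

definition nhead :: "nform \<Rightarrow> atom" where
  "nhead x = fst (the x)"

fun nappend :: "nform \<Rightarrow> atom set \<Rightarrow> nform" where
  "nappend (Some (a, B)) C = (if B \<inter> C = {} then Some (a, B \<union> C) else None)"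
| "nappend None C = None"

text \<open>The endomorphism of the model extending an assignment \<open>g\<close> of atoms:
  \<open>a * b\<^sub>1 * \<dots> * b\<^sub>k\<close> goes to \<open>g a * g b\<^sub>1 * \<dots> * g b\<^sub>k\<close>, which is \<open>0\<close> unless the \<open>g b\<^sub>i\<close>
  are distinct atoms.\<close>

fun nsubst :: "(atom \<Rightarrow> nform) \<Rightarrow> nform \<Rightarrow> nform" where
  "nsubst g (Some (a, B)) =
     (if (\<forall>b\<in>B. is_atom (g b)) \<and> inj_on (nhead \<circ> g) B
      then nappend (g a) ((nhead \<circ> g) ` B) else None)"
| "nsubst g None = None"

lemma nappend_empty [simp]: "nappend x {} = x"
  by (cases "(x, {} :: atom set)" rule: nappend.cases) auto

lemma nmul_non_atom: "\<not> is_atom y \<Longrightarrow> nmul x y = None"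
  by (cases "(x, y)" rule: nmul.cases) (auto simp: is_atom_def)

lemma nsubst_non_atom: "C \<noteq> {} \<Longrightarrow> \<not> is_atom (nsubst g (Some (b, C)))"
  by (cases "g b") (auto simp: is_atom_def split: if_splits)

lemma nmul_nappend_atom:
  "nmul (nappend z C) (Some (c, {})) = (if c \<in> C then None else nappend z (insert c C))"
  by (cases "(z, C)" rule: nappend.cases) auto

lemma nsubst_nmul_atom:
  "nsubst g (nmul (Some (a, B)) (Some (b, {}))) = nmul (nsubst g (Some (a, B))) (g b)"
proof (cases "is_atom (g b)")
  case False
  then show ?thesis by (simp add: nmul_non_atom)
next
  case atom: True
  then obtain c where gb: "g b = Some (c, {})" by (auto simp: is_atom_def)
  then have hb: "(nhead \<circ> g) b = c" by (simp add: nhead_def)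
  show ?thesis
  proof (cases "b \<in> B")
    case True
    then have "c \<in> (nhead \<circ> g) ` B" using hb by force
    then show ?thesis using gb True by (simp add: nmul_nappend_atom)
  next
    case False
    then show ?thesis using gb hb atom by (simp add: nmul_nappend_atom)
  qed
qed

lemma nsubst_nmul: "nsubst g (nmul x y) = nmul (nsubst g x) (nsubst g y)"
proof (cases "x = None \<or> y = None")
  case True
  then show ?thesis by auto
next
  case False
  then obtain a B b C where x: "x = Some (a, B)" and y: "y = Some (b, C)" by auto
  show ?thesis
  proof (cases "C = {}")
    case True
    then show ?thesis using x y nsubst_nmul_atom by simp
  next
    case False
    then have "nmul (nsubst g x) (nsubst g y) = None"
      unfolding y by (intro nmul_non_atom nsubst_non_atom)
    then show ?thesis using x y False by simp
  qed
qed

lemma nsubst_SomeE: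
  assumes "nsubst g (Some (a, B)) \<noteq> None"
  obtains a' B' where "g a = Some (a', B')" "inj_on (nhead \<circ> g) B"
    "B' \<inter> (nhead \<circ> g) ` B = {}" "nsubst g (Some (a, B)) = Some (a', B' \<union> (nhead \<circ> g) ` B)"
proof -
  let ?h = "nhead \<circ> g"
  have inj: "inj_on ?h B" and res: "nsubst g (Some (a, B)) = nappend (g a) (?h ` B)"
    using assms by (simp_all split: if_splits)
  with assms obtain a' B' where "g a = Some (a', B')"
    by (cases "(g a, ?h ` B)" rule: nappend.cases) auto
  with res assms inj show thesis by (simp add: that split: if_splits)
qed

fun atom_val :: "(nat \<Rightarrow> nform) \<Rightarrow> atom \<Rightarrow> nform" where
  "atom_val \<rho> (AV i) = \<rho> i"
| "atom_val \<rho> AP = Some (AP, {})"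

lemma neval_eq_nsubst_nf: "neval \<rho> t = nsubst (atom_val \<rho>) (nf t)"
  by (induction t) (simp_all add: nsubst_nmul)

section \<open>Uncountably many term clones\<close>

definition clone_nf :: "nat set \<Rightarrow> nform \<Rightarrow> bool" where
  "clone_nf N x \<longleftrightarrow> (case x of None \<Rightarrow> True
     | Some (a, B) \<Rightarrow> B = {} \<or> (AP \<in> B \<and> finite B \<and> card (B - {AP}) \<in> N))"

lemma clone_nf_nsubst:
  assumes x: "clone_nf N x" and gP: "g AP = Some (AP, {})" and g: "\<And>c. clone_nf N (g c)"
  shows "clone_nf N (nsubst g x)"
proof (cases x)
  case None
  then show ?thesis by (simp add: clone_nf_def)
next
  case (Some aB)
  then obtain a B where x_eq: "x = Some (a, B)" by (cases aB) auto
  let ?h = "nhead \<circ> g"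
  show ?thesis
  proof (cases "B = {} \<or> nsubst g x = None")
    case True
    then show ?thesis using x_eq g by (auto simp: clone_nf_def)
  next
    case False
    then have "B \<noteq> {}" by simp
    then have B: "AP \<in> B" "finite B" "card (B - {AP}) \<in> N"
      using x unfolding x_eq clone_nf_def option.case prod.case by blast+
    from False have "nsubst g (Some (a, B)) \<noteq> None" unfolding x_eq by simp
    then obtain a' B' where ga: "g a = Some (a', B')" and inj: "inj_on ?h B"
      and disj: "B' \<inter> ?h ` B = {}" and res: "nsubst g x = Some (a', B' \<union> ?h ` B)"
      unfolding x_eq by (rule nsubst_SomeE)
    have hP: "?h AP = AP" using gP by (simp add: nhead_def)
    then have P_img: "AP \<in> ?h ` B" using B(1) by (metis image_eqI)
    then have "B' = {}" using disj g[of a] ga by (auto simp: clone_nf_def)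
    have "?h ` B - {AP} = ?h ` (B - {AP})"
      using inj_on_image_set_diff[OF inj, of B "{AP}"] hP B(1) by simp
    moreover have "card (?h ` (B - {AP})) = card (B - {AP})"
      using inj_on_subset[OF inj Diff_subset] by (rule card_image)
    ultimately have "card (?h ` B - {AP}) \<in> N" using B(3) by simp
    with P_img B(2) show ?thesis
      unfolding res \<open>B' = {}\<close> Un_empty_left clone_nf_def option.case prod.case by blast
  qed
qed

definition clone_of :: "nat set \<Rightarrow> trm set set" where
  "clone_of N = cls ` {t. clone_nf N (nf t)}"

lemma cls_in_clone_of_iff: "cls t \<in> clone_of N \<longleftrightarrow> clone_nf N (nf t)"
proof
  assume "cls t \<in> clone_of N"
  then obtain u where "cls t = cls u" "clone_nf N (nf u)" unfolding clone_of_def by auto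
  moreover have "u \<in> cls t" using \<open>cls t = cls u\<close> by (simp add: cls_def ded.refl)
  then have "nf t = nf u" unfolding cls_def by (simp add: nf_eq_if_ded)
  ultimately show "clone_nf N (nf t)" by simp
qed (simp add: clone_of_def)

lemma term_clone_clone_of: "term_clone (clone_of N)"
  unfolding term_clone_def
proof (intro conjI allI impI)
  show "clone_of N \<subseteq> FV" by (auto simp: clone_of_def FV_def)
next
  fix i
  show "cls (V i) \<in> clone_of N" by (simp add: cls_in_clone_of_iff clone_nf_def)
next
  fix t and \<sigma> :: "nat \<Rightarrow> trm"
  assume "cls t \<in> clone_of N \<and> (\<forall>i. cls (\<sigma> i) \<in> clone_of N)"
  then have "clone_nf N (nf t)" and \<sigma>: "\<And>i. clone_nf N (nf (\<sigma> i))"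
    by (auto simp: cls_in_clone_of_iff)
  moreover have "clone_nf N (atom_val (\<lambda>i. nf (\<sigma> i)) c)" for c
    using \<sigma> by (cases c) (simp_all add: clone_nf_def)
  ultimately have "clone_nf N (nsubst (atom_val (\<lambda>i. nf (\<sigma> i))) (nf t))"
    by (intro clone_nf_nsubst) auto
  then show "cls (subst \<sigma> t) \<in> clone_of N"
    by (simp add: cls_in_clone_of_iff eval_subst neval_eq_nsubst_nf[symmetric])
qed

fun probe :: "nat \<Rightarrow> trm" where
  "probe 0 = Mul (V 0) P"
| "probe (Suc n) = Mul (probe n) (V (Suc n))"

lemma nf_probe: "nf (probe n) = Some (AV 0, insert AP (AV ` {1..n}))"
proof (induction n)
  case (Suc n)
  have "insert AP (AV ` {1..Suc n}) = insert (AV (Suc n)) (insert AP (AV ` {1..n}))"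
    by (auto simp: atLeastAtMostSuc_conv)
  then show ?case using Suc by auto
qed simp

lemma clone_nf_probe_iff: "clone_nf N (nf (probe n)) \<longleftrightarrow> n \<in> N"
proof -
  have "insert AP (AV ` {1..n}) - {AP} = AV ` {1..n}" by auto
  moreover have "card (AV ` {1..n}) = n" by (simp add: card_image inj_on_def)
  ultimately show ?thesis by (simp add: nf_probe clone_nf_def)
qed

lemma inj_clone_of: "inj clone_of"
proof (rule injI)
  fix N M
  assume "clone_of N = clone_of M"
  then have "n \<in> N \<longleftrightarrow> n \<in> M" for n
    using cls_in_clone_of_iff clone_nf_probe_iff by metis
  then show "N = M" by blast
qed

lemma uncountable_nat_sets: "uncountable (UNIV :: nat set set)"
  using Cantors_theorem[of "UNIV :: nat set"] by (auto simp: uncountable_def)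

lemma uncountable_term_clones: "uncountable {S. term_clone S}"
proof
  assume "countable {S. term_clone S}"
  then have "countable (range clone_of)"
    by (rule countable_subset[rotated]) (auto intro: term_clone_clone_of)
  then have "countable (UNIV :: nat set set)"
    using countable_image_inj_on inj_clone_of by blast
  then show False using uncountable_nat_sets by contradiction
qed

theorem mainTheorem1:
  shows "finitely_based_V \<and> locally_finite_V TYPE('a) \<and>
         uncountable {S. term_clone S}"
  using finitely_based_V locally_finite_V uncountable_term_clones by blast

end
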